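(* Let $\rho$ be a probability distribution on $\{1,2,\dots\}$ with finite mean and $\rho_1+\rho_2>0$, and let $\{\Lambda_t\}_{t\ge0}$ be the Poisson($\rho$) hypergraph process on $V=\{1,\dots,N\}$ defined on $(\Omega,\mathcal F,\mathbb P)$. Fix $t>0$ and let $V^\star_t$ be the set of identifiable vertices of $\Lambda_t$. (i) For any collection of non-negative integers $\{k_A: A\subset V\}$, setting $p(S)=\mathbb P\big(\bigcap_{A:|A\setminus S|>1}\{\Lambda_t(A)=k_A\}\big)$ for $S\subset V$, we have $$\mathbb P\Big(\bigcap_{A:|A\setminus V^\star_t|>1}\{\Lambda_t(A)=k_A\}\,\Big|\,\mathcal F_{V^\star_t}\Big)=p(V^\star_t).$$ (ii) For $S\subset V$ with $|S|=m$, on the event $\{V^\star_t=S\}$, the conditional distribution given $\mathcal F_{V^\star_t}$ of the random hypergraph $\Lambda^S_t$ on $V\setminus S$ (restricted to nonempty subsets $A\subset V\setminus S$) is that of a Poisson($\beta$) random hypergraph on $N-m$ vertices with $\beta_1=0$ and $$\beta_j=\frac{t}{1-m/N}\binom{N-m}{j}\sum_{i\ge0}\rho_{i+j}\frac{\binom{m}{i}}{\binom{N}{j+i}},\quad j\ge2.$$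
   Context: A hypergraph on $V$ is a map $\Lambda:2^V\to\{0,1,2,\dots\}$. For $S\subset V$, $\Lambda^S(A)=\sum_{B\supset A,\,B\setminus S=A}\Lambda(B)$, $A\subset V\setminus S$. Hypergraph collapse: while some vertex $v$ has $\Lambda(\{v\})\ge1$, choose one, replace $V$ by $V\setminus\{v\}$ and $\Lambda$ by $\Lambda^{\{v\}}$; the removed vertices are identifiable. Poisson($\rho$) hypergraph process: for each $A\subset V$, $\{\Lambda_t(A)\}_{t\ge0}$ is a Poisson process of rate $N\rho_{|A|}/\binom{N}{|A|}$, independent over $A$. A Poisson($\beta$) random hypergraph on $n$ vertices: the $\Lambda(A)$ are independent Poisson with mean $n\beta_{|A|}/\binom{n}{|A|}$. $\sigma$-fields: for $S\subset V$, $\mathcal F^S_t=\bigvee_{0\le s\le t}\sigma\{\Lambda_s(A):|A\setminus S|\le1\}$, and $\mathcal F_{V^\star_t}=\{B\in\mathcal F: B\cap\{V^\star_t=S\}\in\mathcal F^S_t\text{ for all }S\subset V\}$. *)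

theory Defs
  imports "HOL-Probability.Probability"
begin

text \<open>A hypergraph on a finite vertex set W is a map L :: nat set => nat (only the
values on subsets of W matter).  hproj W L S is the hypergraph L^S on W - S:
L^S(A) = sum of L(B) over B subset of W with B containing A and B - S = A.\<close>

definition hproj :: "nat set \<Rightarrow> (nat set \<Rightarrow> nat) \<Rightarrow> nat set \<Rightarrow> nat set \<Rightarrow> nat" where
  "hproj W L S A = (\<Sum>B | B \<subseteq> W \<and> A \<subseteq> B \<and> B - S = A. L B)"

inductive collapse_step :: "nat set \<times> (nat set \<Rightarrow> nat) \<Rightarrow> nat set \<times> (nat set \<Rightarrow> nat) \<Rightarrow> bool" where
  "v \<in> W \<Longrightarrow> L {v} \<ge> 1 \<Longrightarrow> collapse_step (W, L) (W - {v}, hproj W L {v})"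

definition collapse_terminal :: "nat set \<times> (nat set \<Rightarrow> nat) \<Rightarrow> bool" where
  "collapse_terminal WL \<longleftrightarrow> (\<forall>v\<in>fst WL. snd WL {v} = 0)"

definition identifiable :: "nat set \<Rightarrow> (nat set \<Rightarrow> nat) \<Rightarrow> nat set" where
  "identifiable V L = (THE S. \<exists>W' L'. collapse_step\<^sup>*\<^sup>* (V, L) (W', L')
       \<and> collapse_terminal (W', L') \<and> S = V - W')"

definition poisson_prob :: "real \<Rightarrow> nat \<Rightarrow> real" where
  "poisson_prob \<mu> k = exp (- \<mu>) * \<mu> ^ k / fact k"

definition poisson_process :: "'a measure \<Rightarrow> real \<Rightarrow> (real \<Rightarrow> 'a \<Rightarrow> nat) \<Rightarrow> bool" where
  "poisson_process M c X \<longleftrightarrow>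
     (\<forall>s\<ge>0. X s \<in> measurable M (count_space UNIV)) \<and>
     (\<forall>\<omega>\<in>space M. X 0 \<omega> = 0 \<and>
        (\<forall>s s'. 0 \<le> s \<longrightarrow> s \<le> s' \<longrightarrow> X s \<omega> \<le> X s' \<omega>) \<and>
        (\<forall>s\<ge>0. \<exists>\<delta>>0. \<forall>s'. s \<le> s' \<and> s' < s + \<delta> \<longrightarrow> X s' \<omega> = X s \<omega>)) \<and>
     (\<forall>(n::nat) (ts::nat \<Rightarrow> real). 0 \<le> ts 0 \<and> (\<forall>i<n. ts i < ts (Suc i)) \<longrightarrow>
        prob_space.indep_vars M (\<lambda>_. count_space UNIV)
          (\<lambda>i \<omega>. X (ts (Suc i)) \<omega> - X (ts i) \<omega>) {..<n}) \<and>
     (\<forall>s s' k. 0 \<le> s \<longrightarrow> s \<le> s' \<longrightarrow>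
        measure M {\<omega>\<in>space M. X s' \<omega> - X s \<omega> = k} = poisson_prob (c * (s' - s)) k)"

definition hyper_rate :: "nat \<Rightarrow> (nat \<Rightarrow> real) \<Rightarrow> nat set \<Rightarrow> real" where
  "hyper_rate N \<rho> A = real N * \<rho> (card A) / real (N choose card A)"

definition poisson_hypergraph_process ::
  "'a measure \<Rightarrow> nat \<Rightarrow> (nat \<Rightarrow> real) \<Rightarrow> (real \<Rightarrow> 'a \<Rightarrow> nat set \<Rightarrow> nat) \<Rightarrow> bool" where
  "poisson_hypergraph_process M N \<rho> \<Lambda> \<longleftrightarrow>
     (\<forall>A. A \<subseteq> {1..N} \<longrightarrow> poisson_process M (hyper_rate N \<rho> A) (\<lambda>s \<omega>. \<Lambda> s \<omega> A)) \<and>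
     prob_space.indep_vars M (\<lambda>_. PiM {0..} (\<lambda>_::real. count_space (UNIV::nat set)))
        (\<lambda>A \<omega>. restrict (\<lambda>s. \<Lambda> s \<omega> A) {0..}) (Pow {1..N})"

definition Vstar :: "nat \<Rightarrow> (real \<Rightarrow> 'a \<Rightarrow> nat set \<Rightarrow> nat) \<Rightarrow> real \<Rightarrow> 'a \<Rightarrow> nat set" where
  "Vstar N \<Lambda> t \<omega> = identifiable {1..N} (\<Lambda> t \<omega>)"

definition F_sub :: "'a measure \<Rightarrow> nat \<Rightarrow> (real \<Rightarrow> 'a \<Rightarrow> nat set \<Rightarrow> nat) \<Rightarrow> nat set \<Rightarrow> real \<Rightarrow> 'a measure" where
  "F_sub M N \<Lambda> S t = sigma (space M)
     {{\<omega>\<in>space M. \<Lambda> s \<omega> A = k} | s A k. 0 \<le> s \<and> s \<le> t \<and> A \<subseteq> {1..N} \<and> card (A - S) \<le> 1}"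

definition F_stop :: "'a measure \<Rightarrow> nat \<Rightarrow> (real \<Rightarrow> 'a \<Rightarrow> nat set \<Rightarrow> nat) \<Rightarrow> real \<Rightarrow> 'a measure" where
  "F_stop M N \<Lambda> t = sigma (space M)
     {B \<in> sets M. \<forall>S. S \<subseteq> {1..N} \<longrightarrow>
         B \<inter> {\<omega>\<in>space M. Vstar N \<Lambda> t \<omega> = S} \<in> sets (F_sub M N \<Lambda> S t)}"

definition p_event :: "'a measure \<Rightarrow> nat \<Rightarrow> (real \<Rightarrow> 'a \<Rightarrow> nat set \<Rightarrow> nat) \<Rightarrow> real
     \<Rightarrow> (nat set \<Rightarrow> nat) \<Rightarrow> nat set \<Rightarrow> real" where
  "p_event M N \<Lambda> t k S = measure M
     {\<omega>\<in>space M. \<forall>A. A \<subseteq> {1..N} \<and> card (A - S) > 1 \<longrightarrow> \<Lambda> t \<omega> A = k A}"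

definition beta_coef :: "nat \<Rightarrow> (nat \<Rightarrow> real) \<Rightarrow> real \<Rightarrow> nat \<Rightarrow> nat \<Rightarrow> real" where
  "beta_coef N \<rho> t m j = (if j = 1 then 0 else
     t / (1 - real m / real N) * real ((N - m) choose j) *
       (\<Sum>i. \<rho> (i + j) * real (m choose i) / real (N choose (j + i))))"

end

theory Submission
  imports Defs
begin

text \<open>Whether \<open>V\<^sup>\<star>\<^sub>t = S\<close> can be decided from the counts of the hyperedges \<open>A\<close> with
\<open>|A - S| \<le> 1\<close>: the collapse removing \<open>S\<close> only ever inspects singletons of projections
\<open>\<Lambda>\<^sup>S\<^sup>'({v})\<close> with \<open>S' \<subseteq> S\<close>, and halting at \<open>S\<close> only concerns \<open>\<Lambda>\<^sup>S({v})\<close>.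
Hence \<open>{V\<^sup>\<star>\<^sub>t = S}\<close> lies in \<open>F\<^sup>S\<^sub>t\<close>, which is independent of the counts of the
remaining hyperedges. Conditioning on \<open>F\<^sub>V\<^sub>\<star>\<close> therefore leaves the law of those counts
unchanged on \<open>{V\<^sup>\<star>\<^sub>t = S}\<close>, which is (i). For (ii), on that event the singletons of
\<open>\<Lambda>\<^sup>S\<^sub>t\<close> vanish, while for \<open>|A| \<ge> 2\<close> the count \<open>\<Lambda>\<^sup>S\<^sub>t(A)\<close> is the sum of the
independent Poisson counts \<open>\<Lambda>\<^sub>t(B)\<close> over the disjoint fibres \<open>B - S = A\<close>, whose rates
add up to the stated mean.\<close>

section \<open>Independent Poisson counts\<close>

lemma poisson_prob_0: "poisson_prob 0 n = (if n = 0 then 1 else 0)"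
  unfolding poisson_prob_def by simp

lemma poisson_prob_add:
  "poisson_prob (a + c) n = (\<Sum>i\<le>n. poisson_prob a i * poisson_prob c (n - i))"
proof -
  have "poisson_prob (a + c) n
      = (\<Sum>i\<le>n. exp (- (a + c)) * (of_nat (n choose i) * a ^ i * c ^ (n - i)) / fact n)"
    unfolding poisson_prob_def binomial_ring by (simp add: sum_distrib_left sum_divide_distrib)
  also have "\<dots> = (\<Sum>i\<le>n. poisson_prob a i * poisson_prob c (n - i))"
  proof (rule sum.cong[OF refl])
    fix i assume "i \<in> {..n}"
    then show "exp (- (a + c)) * (of_nat (n choose i) * a ^ i * c ^ (n - i)) / fact n
        = poisson_prob a i * poisson_prob c (n - i)"
      by (simp add: poisson_prob_def binomial_fact exp_add[symmetric] field_simps)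
  qed
  finally show ?thesis .
qed

lemma sets_PiM_count_space_finite:
  fixes X :: "('i \<Rightarrow> 'b::countable) set"
  assumes "finite I" "X \<subseteq> space (PiM I (\<lambda>_. count_space UNIV))"
  shows "X \<in> sets (PiM I (\<lambda>_. count_space UNIV))"
proof -
  have space: "space (PiM I (\<lambda>_. count_space (UNIV :: 'b set))) = PiE I (\<lambda>_. UNIV)"
    by (simp add: space_PiM)
  have "countable X"
    using assms by (intro countable_subset[OF _ countable_PiE]) (auto simp: space)
  moreover have "{x} \<in> sets (PiM I (\<lambda>_. count_space UNIV))" if "x \<in> X" for x
  proof -
    have "x \<in> extensional I" using that assms(2) by (auto simp: space PiE_def)
    then have "{x} = PiE I (\<lambda>i. {x i})" by (simp add: PiE_singleton)
    then show ?thesis using assms(1) by (simp add: sets_PiM_I_finite)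
  qed
  ultimately have "(\<Union>x\<in>X. {x}) \<in> sets (PiM I (\<lambda>_. count_space UNIV))"
    by (intro sets.countable_UN') auto
  then show ?thesis by simp
qed

lemma measurable_PiM_count_space_finite:
  fixes f :: "('i \<Rightarrow> 'b::countable) \<Rightarrow> 'c::countable"
  assumes "finite I"
  shows "f \<in> measurable (PiM I (\<lambda>_. count_space UNIV)) (count_space UNIV)"
  unfolding measurable_count_space_eq2_countable
  by (auto intro: sets_PiM_count_space_finite[OF assms])

lemma (in prob_space) indep_vars_sum_disjoint:
  fixes Z :: "'i \<Rightarrow> 'a \<Rightarrow> nat"
  assumes indep: "indep_vars (\<lambda>_. count_space UNIV) Z I"
    and disj: "disjoint_family_on fib D"
    and fib: "\<And>j. j \<in> D \<Longrightarrow> finite (fib j) \<and> fib j \<subseteq> I"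
  shows "indep_vars (\<lambda>_. count_space UNIV) (\<lambda>j \<omega>. \<Sum>i\<in>fib j. Z i \<omega>) D"
proof -
  have "indep_vars (\<lambda>j. PiM (fib j) (\<lambda>_. count_space UNIV)) (\<lambda>j \<omega>. restrict (\<lambda>i. Z i \<omega>) (fib j)) D"
    using fib disj by (intro indep_vars_restrict[OF indep]) auto
  then have "indep_vars (\<lambda>_. count_space UNIV)
      (\<lambda>j \<omega>. (\<lambda>f. \<Sum>i\<in>fib j. f i) (restrict (\<lambda>i. Z i \<omega>) (fib j))) D"
    by (rule indep_vars_compose2) (use fib measurable_PiM_count_space_finite in blast)
  then show ?thesis by simp
qed

lemma (in prob_space) indep_vars_prob_all_eq:
  fixes Y :: "'i \<Rightarrow> 'a \<Rightarrow> 'b"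
  assumes indep: "indep_vars (\<lambda>_. count_space UNIV) Y D" and "finite D"
  shows "prob {\<omega>\<in>space M. \<forall>j\<in>D. Y j \<omega> = k j} = (\<Prod>j\<in>D. prob {\<omega>\<in>space M. Y j \<omega> = k j})"
proof (cases "D = {}")
  case True
  then show ?thesis by (simp add: prob_space)
next
  case False
  have "prob (\<Inter>j\<in>D. Y j -` {k j} \<inter> space M) = (\<Prod>j\<in>D. prob (Y j -` {k j} \<inter> space M))"
    by (rule indep_varsD[OF indep False \<open>finite D\<close>]) auto
  moreover have "(\<Inter>j\<in>D. Y j -` {k j} \<inter> space M) = {\<omega>\<in>space M. \<forall>j\<in>D. Y j \<omega> = k j}"
    using False by auto
  ultimately show ?thesis by (simp add: vimage_def Int_def conj_commute)
qed

lemma (in prob_space) indep_vars_poisson_sum: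
  fixes Z :: "'i \<Rightarrow> 'a \<Rightarrow> nat"
  assumes indep: "indep_vars (\<lambda>_. count_space UNIV) Z I"
    and pois: "\<And>i k. i \<in> I \<Longrightarrow> prob {\<omega>\<in>space M. Z i \<omega> = k} = poisson_prob (\<mu> i) k"
    and "finite F" "F \<subseteq> I"
  shows "prob {\<omega>\<in>space M. (\<Sum>i\<in>F. Z i \<omega>) = n} = poisson_prob (\<Sum>i\<in>F. \<mu> i) n"
  using \<open>finite F\<close> \<open>F \<subseteq> I\<close>
proof (induction F arbitrary: n rule: finite_induct)
  case empty
  then show ?case by (simp add: poisson_prob_0 prob_space)
next
  case (insert b F)
  define Y where "Y x \<omega> = (\<Sum>i\<in>(if x then {b} else F). Z i \<omega>)" for x \<omega>
  have Y: "indep_vars (\<lambda>_. count_space UNIV) Y UNIV"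
    unfolding Y_def using insert
    by (intro indep_vars_sum_disjoint[OF indep]) (auto simp: disjoint_family_on_def)
  have split: "prob {\<omega>\<in>space M. Z b \<omega> = i \<and> (\<Sum>i\<in>F. Z i \<omega>) = j}
      = prob {\<omega>\<in>space M. Z b \<omega> = i} * prob {\<omega>\<in>space M. (\<Sum>i\<in>F. Z i \<omega>) = j}" for i j
    using indep_vars_prob_all_eq[OF Y, of "\<lambda>x. if x then i else j"]
    by (simp add: Y_def UNIV_bool ex_bool_eq conj_commute mult.commute)
  have [measurable]: "Z i \<in> measurable M (count_space UNIV)" if "i \<in> insert b F" for i
    using indep that insert.prems unfolding indep_vars_def by auto
  have "{\<omega>\<in>space M. (\<Sum>i\<in>insert b F. Z i \<omega>) = n}
      = (\<Union>i\<le>n. {\<omega>\<in>space M. Z b \<omega> = i \<and> (\<Sum>i\<in>F. Z i \<omega>) = n - i})"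
    using insert.hyps by auto
  then have "prob {\<omega>\<in>space M. (\<Sum>i\<in>insert b F. Z i \<omega>) = n}
      = (\<Sum>i\<le>n. prob {\<omega>\<in>space M. Z b \<omega> = i \<and> (\<Sum>i\<in>F. Z i \<omega>) = n - i})"
    by (simp only:) (rule measure_finite_Union, auto simp: disjoint_family_on_def)
  also have "\<dots> = (\<Sum>i\<le>n. poisson_prob (\<mu> b) i * poisson_prob (\<Sum>i\<in>F. \<mu> i) (n - i))"
    using insert by (simp add: split pois)
  also have "\<dots> = poisson_prob (\<Sum>i\<in>insert b F. \<mu> i) n"
    using insert.hyps by (simp add: poisson_prob_add)
  finally show ?case .
qed

lemma (in prob_space) indep_vars_poisson_sums:
  fixes Z :: "'i \<Rightarrow> 'a \<Rightarrow> nat"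
  assumes indep: "indep_vars (\<lambda>_. count_space UNIV) Z I"
    and pois: "\<And>i k. i \<in> I \<Longrightarrow> prob {\<omega>\<in>space M. Z i \<omega> = k} = poisson_prob (\<mu> i) k"
    and "finite D" and disj: "disjoint_family_on fib D"
    and fib: "\<And>j. j \<in> D \<Longrightarrow> finite (fib j) \<and> fib j \<subseteq> I"
  shows "prob {\<omega>\<in>space M. \<forall>j\<in>D. (\<Sum>i\<in>fib j. Z i \<omega>) = k j}
       = (\<Prod>j\<in>D. poisson_prob (\<Sum>i\<in>fib j. \<mu> i) (k j))"
  using indep_vars_prob_all_eq[OF indep_vars_sum_disjoint[OF indep disj fib] \<open>finite D\<close>]
    indep_vars_poisson_sum[OF indep pois] fib by simp

lemma (in finite_measure_subalgebra) real_cond_exp_indicator_Int_indep: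
  assumes G: "G \<in> sets F" and X: "X \<in> sets M"
    and indep: "\<And>B. B \<in> sets F \<Longrightarrow> measure M (B \<inter> G \<inter> X) = measure M (B \<inter> G) * p"
  shows "AE \<omega> in M. real_cond_exp M F (indicator (G \<inter> X)) \<omega> = p * indicator G \<omega>"
proof (rule real_cond_exp_charact)
  have sets_F: "A \<in> sets F \<Longrightarrow> A \<in> sets M" for A
    using subalg by (auto simp: subalgebra_def)
  fix B assume B: "B \<in> sets F"
  have "(\<integral>\<omega>\<in>B. indicator (G \<inter> X) \<omega> \<partial>M) = measure M (B \<inter> G \<inter> X)"
    using sets_F[OF B] sets_F[OF G] X
    by (simp add: set_lebesgue_integral_def indicator_inter_arith[symmetric] Int_assoc Int_absorb2)
  also have "\<dots> = (\<integral>\<omega>\<in>B. p * indicator G \<omega> \<partial>M)"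
    using sets_F[OF B] sets_F[OF G]
    by (simp add: indep[OF B] set_lebesgue_integral_def indicator_inter_arith[symmetric] Int_absorb2)
  finally show "(\<integral>\<omega>\<in>B. indicator (G \<inter> X) \<omega> \<partial>M) = (\<integral>\<omega>\<in>B. p * indicator G \<omega> \<partial>M)" .
qed (use G X subalg in \<open>auto simp: subalgebra_def less_top[symmetric] intro!: borel_measurable_indicator\<close>)

section \<open>Hypergraph collapse\<close>

text \<open>A run of the collapse is tracked by the set \<open>S\<close> of removed vertices alone: the
hypergraph it has reached is the projection \<open>hproj V L S\<close>.\<close>

inductive collapsible :: "nat set \<Rightarrow> (nat set \<Rightarrow> nat) \<Rightarrow> nat set \<Rightarrow> bool" for V L where
  collapsible_empty: "collapsible V L {}"
| collapsible_insert:
    "collapsible V L S \<Longrightarrow> v \<in> V - S \<Longrightarrow> hproj V L S {v} \<ge> 1 \<Longrightarrow> collapsible V L (insert v S)"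

definition collapse_blocked :: "nat set \<Rightarrow> (nat set \<Rightarrow> nat) \<Rightarrow> nat set \<Rightarrow> bool" where
  "collapse_blocked V L S \<longleftrightarrow> (\<forall>v\<in>V - S. hproj V L S {v} = 0)"

lemma collapsible_subset: "collapsible V L S \<Longrightarrow> S \<subseteq> V"
  by (induction rule: collapsible.induct) auto

lemma hproj_empty: "A \<subseteq> V \<Longrightarrow> hproj V L {} A = L A"
proof -
  assume "A \<subseteq> V"
  then have "{B. B \<subseteq> V \<and> A \<subseteq> B \<and> B - {} = A} = {A}" by auto
  then show ?thesis unfolding hproj_def by simp
qed

lemma hproj_cong: "(\<And>B. B \<subseteq> W \<Longrightarrow> L B = L' B) \<Longrightarrow> hproj W L S A = hproj W L' S A"
  unfolding hproj_def by (rule sum.cong) auto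

lemma hproj_insert:
  assumes "finite V" and v: "v \<in> V - S" and A: "A \<subseteq> V - insert v S"
  shows "hproj (V - S) (hproj V L S) {v} A = hproj V L (insert v S) A"
proof -
  let ?fibre = "\<lambda>A. {B. B \<subseteq> V \<and> A \<subseteq> B \<and> B - S = A}"
  have "{B. B \<subseteq> V - S \<and> A \<subseteq> B \<and> B - {v} = A} = {A, insert v A}"
    using A v by auto
  moreover have "A \<noteq> insert v A" using A by auto
  ultimately have "hproj (V - S) (hproj V L S) {v} A = hproj V L S A + hproj V L S (insert v A)"
    unfolding hproj_def[of "V - S"] by simp
  also have "\<dots> = sum L (?fibre A \<union> ?fibre (insert v A))"
  proof -
    have fin: "finite (?fibre B)" for B
      by (rule finite_subset[of _ "Pow V"]) (use \<open>finite V\<close> in auto)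
    have "?fibre A \<inter> ?fibre (insert v A) = {}" using A by auto
    then show ?thesis unfolding hproj_def by (rule sum.union_disjoint[OF fin fin, symmetric])
  qed
  also have "?fibre A \<union> ?fibre (insert v A) = {B. B \<subseteq> V \<and> A \<subseteq> B \<and> B - insert v S = A}"
    using A v by auto
  finally show ?thesis unfolding hproj_def .
qed

lemma hproj_singleton_mono:
  assumes "finite V" "S \<subseteq> S'" "v \<notin> S'"
  shows "hproj V L S {v} \<le> hproj V L S' {v}"
  unfolding hproj_def
proof (rule sum_mono2)
  show "finite {B. B \<subseteq> V \<and> {v} \<subseteq> B \<and> B - S' = {v}}"
    by (rule finite_subset[of _ "Pow V"]) (use assms in auto)
qed (use assms in auto)

lemma collapse_steps_collapsible:
  assumes "collapse_step\<^sup>*\<^sup>* (V, L) (W, L')" and "finite V"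
  shows "W \<subseteq> V \<and> collapsible V L (V - W) \<and> (\<forall>A. A \<subseteq> W \<longrightarrow> L' A = hproj V L (V - W) A)"
  using assms(1)
proof (induction rule: rtranclp_induct2)
  case refl
  then show ?case by (auto simp: hproj_empty intro: collapsible_empty)
next
  case (step W L' W' L'')
  from step.hyps(2) obtain v where v: "v \<in> W" "L' {v} \<ge> 1" and
    after: "W' = W - {v}" "L'' = hproj W L' {v}"
    by (auto elim: collapse_step.cases)
  have removed: "V - W' = insert v (V - W)"
    using step.IH v after by auto
  have WV: "W \<subseteq> V" using step.IH by simp
  then have W: "V - (V - W) = W" by auto
  have "hproj W L' {v} A = hproj V L (insert v (V - W)) A" if "A \<subseteq> W - {v}" for A
  proof -
    have "hproj W L' {v} A = hproj (V - (V - W)) (hproj V L (V - W)) {v} A"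
      unfolding W using step.IH by (intro hproj_cong) auto
    also have "\<dots> = hproj V L (insert v (V - W)) A"
      using that v WV by (intro hproj_insert[OF \<open>finite V\<close>]) auto
    finally show ?thesis .
  qed
  moreover have "collapsible V L (insert v (V - W))"
    using step.IH v by (intro collapsible_insert) auto
  ultimately show ?case
    unfolding removed using step.IH by (auto simp: after)
qed

lemma collapsible_collapse_steps:
  assumes "collapsible V L S" and "finite V"
  shows "\<exists>L'. collapse_step\<^sup>*\<^sup>* (V, L) (V - S, L') \<and> (\<forall>A. A \<subseteq> V - S \<longrightarrow> L' A = hproj V L S A)"
  using assms(1)
proof (induction rule: collapsible.induct)
  case collapsible_empty
  then show ?case by (auto simp: hproj_empty)
next
  case (collapsible_insert S v)
  then obtain L' where steps: "collapse_step\<^sup>*\<^sup>* (V, L) (V - S, L')"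
    and L': "\<forall>A. A \<subseteq> V - S \<longrightarrow> L' A = hproj V L S A"
    by blast
  have "collapse_step (V - S, L') (V - S - {v}, hproj (V - S) L' {v})"
    using collapsible_insert.hyps L' by (intro collapse_step.intros) auto
  with steps have "collapse_step\<^sup>*\<^sup>* (V, L) (V - S - {v}, hproj (V - S) L' {v})"
    by (rule rtranclp.rtrancl_into_rtrancl)
  then have "collapse_step\<^sup>*\<^sup>* (V, L) (V - insert v S, hproj (V - S) L' {v})"
    by (simp only: Diff_insert[symmetric])
  moreover have "hproj (V - S) L' {v} A = hproj V L (insert v S) A" if "A \<subseteq> V - insert v S" for A
  proof -
    have "hproj (V - S) L' {v} A = hproj (V - S) (hproj V L S) {v} A"
      using L' by (intro hproj_cong) auto
    also have "\<dots> = hproj V L (insert v S) A"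
      using collapsible_insert.hyps that \<open>finite V\<close> by (intro hproj_insert) auto
    finally show ?thesis .
  qed
  ultimately show ?case by blast
qed

lemma collapsible_subset_blocked:
  assumes "collapsible V L S" "collapsible V L S'" "collapse_blocked V L S'" "finite V"
  shows "S \<subseteq> S'"
  using assms(1)
proof (induction rule: collapsible.induct)
  case collapsible_empty
  then show ?case by simp
next
  case (collapsible_insert S v)
  show ?case
  proof (rule ccontr)
    assume "\<not> insert v S \<subseteq> S'"
    then have v: "v \<in> V - S'" using collapsible_insert by auto
    then have "hproj V L S {v} \<le> hproj V L S' {v}"
      using hproj_singleton_mono[OF \<open>finite V\<close> collapsible_insert.IH] by simp
    moreover have "hproj V L S' {v} = 0"
      using assms(3) v by (simp add: collapse_blocked_def)
    ultimately show False using collapsible_insert.hyps by simp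
  qed
qed

lemma collapsible_blocked_exists:
  assumes "finite V"
  shows "\<exists>S. collapsible V L S \<and> collapse_blocked V L S"
proof -
  have "\<exists>S. collapsible V L S \<and> (collapse_blocked V L S \<or> n \<le> card S)" for n
  proof (induction n)
    case 0
    then show ?case using collapsible_empty by blast
  next
    case (Suc n)
    then obtain S where S: "collapsible V L S" "collapse_blocked V L S \<or> n \<le> card S" by blast
    show ?case
    proof (cases "collapse_blocked V L S")
      case False
      then obtain v where v: "v \<in> V - S" "hproj V L S {v} \<noteq> 0"
        by (auto simp: collapse_blocked_def)
      then have "collapsible V L (insert v S)"
        using S(1) by (intro collapsible_insert) auto
      moreover have "card (insert v S) = Suc (card S)"
        using v finite_subset[OF collapsible_subset[OF S(1)] assms] by simp
      ultimately show ?thesis using S False by auto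
    qed (use S in blast)
  qed
  then obtain S where S: "collapsible V L S" "collapse_blocked V L S \<or> Suc (card V) \<le> card S"
    by blast
  moreover have "card S \<le> card V"
    using card_mono[OF assms collapsible_subset[OF S(1)]] .
  ultimately show ?thesis by auto
qed

lemma collapse_terminal_iff:
  assumes "finite V"
  shows "(\<exists>W L'. collapse_step\<^sup>*\<^sup>* (V, L) (W, L') \<and> collapse_terminal (W, L') \<and> S = V - W)
     \<longleftrightarrow> collapsible V L S \<and> collapse_blocked V L S"
proof
  assume "\<exists>W L'. collapse_step\<^sup>*\<^sup>* (V, L) (W, L') \<and> collapse_terminal (W, L') \<and> S = V - W"
  then obtain W L' where steps: "collapse_step\<^sup>*\<^sup>* (V, L) (W, L')"
    and terminal: "collapse_terminal (W, L')" and S: "S = V - W"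
    by blast
  note W = collapse_steps_collapsible[OF steps assms]
  then have "W = V - S" using S by auto
  then show "collapsible V L S \<and> collapse_blocked V L S"
    using W terminal S by (auto simp: collapse_blocked_def collapse_terminal_def)
next
  assume S: "collapsible V L S \<and> collapse_blocked V L S"
  then obtain L' where steps: "collapse_step\<^sup>*\<^sup>* (V, L) (V - S, L')"
    and L': "\<forall>A. A \<subseteq> V - S \<longrightarrow> L' A = hproj V L S A"
    using collapsible_collapse_steps assms by blast
  have "collapse_terminal (V - S, L')"
    using S L' by (auto simp: collapse_terminal_def collapse_blocked_def)
  moreover have "S = V - (V - S)" using collapsible_subset S by blast
  ultimately show "\<exists>W L'. collapse_step\<^sup>*\<^sup>* (V, L) (W, L') \<and> collapse_terminal (W, L') \<and> S = V - W"
    using steps by blast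
qed

lemma identifiable_eq_iff:
  assumes "finite V"
  shows "identifiable V L = S \<longleftrightarrow> collapsible V L S \<and> collapse_blocked V L S"
proof -
  obtain S0 where S0: "collapsible V L S0" "collapse_blocked V L S0"
    using collapsible_blocked_exists[OF assms] by blast
  have unique: "S' = S0" if "collapsible V L S'" "collapse_blocked V L S'" for S'
    using collapsible_subset_blocked[OF that(1) S0 assms]
      collapsible_subset_blocked[OF S0(1) that assms] by blast
  have "identifiable V L = S0"
    unfolding identifiable_def
  proof (rule the_equality)
    show "\<exists>W L'. collapse_step\<^sup>*\<^sup>* (V, L) (W, L') \<and> collapse_terminal (W, L') \<and> S0 = V - W"
      using S0 by (simp only: collapse_terminal_iff[OF assms])
    fix S' assume "\<exists>W L'. collapse_step\<^sup>*\<^sup>* (V, L) (W, L') \<and> collapse_terminal (W, L') \<and> S' = V - W"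
    then have "collapsible V L S' \<and> collapse_blocked V L S'"
      by (simp only: collapse_terminal_iff[OF assms])
    then show "S' = S0" using unique by blast
  qed
  then show ?thesis using S0 unique by blast
qed

lemma hproj_singleton_cong:
  assumes "S' \<subseteq> S" "v \<notin> S'" and agree: "\<And>A. A \<subseteq> V \<Longrightarrow> card (A - S) \<le> 1 \<Longrightarrow> L A = L' A"
  shows "hproj V L S' {v} = hproj V L' S' {v}"
  unfolding hproj_def
proof (rule sum.cong[OF refl])
  fix B assume "B \<in> {B. B \<subseteq> V \<and> {v} \<subseteq> B \<and> B - S' = {v}}"
  then have "B \<subseteq> V" "B - S \<subseteq> {v}" using assms(1) by auto
  then show "L B = L' B"
    using agree card_mono[of "{v}" "B - S"] by auto
qed

lemma collapsible_agree:
  assumes "collapsible V L S'" "S' \<subseteq> S"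
    and "\<And>A. A \<subseteq> V \<Longrightarrow> card (A - S) \<le> 1 \<Longrightarrow> L A = L' A"
  shows "collapsible V L' S'"
  using assms(1,2)
proof (induction rule: collapsible.induct)
  case collapsible_empty
  show ?case by (rule collapsible.collapsible_empty)
next
  case (collapsible_insert S' v)
  then have "hproj V L' S' {v} = hproj V L S' {v}"
    using hproj_singleton_cong[of S' S v V L L'] assms(3) by simp
  with collapsible_insert show ?case
    by (intro collapsible.collapsible_insert) auto
qed

lemma collapsible_blocked_agree:
  assumes "\<And>A. A \<subseteq> V \<Longrightarrow> card (A - S) \<le> 1 \<Longrightarrow> L A = L' A"
  shows "collapsible V L S \<and> collapse_blocked V L S \<longleftrightarrow> collapsible V L' S \<and> collapse_blocked V L' S"
proof -
  have sym: "\<And>A. A \<subseteq> V \<Longrightarrow> card (A - S) \<le> 1 \<Longrightarrow> L' A = L A"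
    using assms by simp
  have "collapse_blocked V L S \<longleftrightarrow> collapse_blocked V L' S"
    unfolding collapse_blocked_def using hproj_singleton_cong[of S S _ V L L'] assms by simp
  moreover have "collapsible V L S \<longleftrightarrow> collapsible V L' S"
  proof
    assume "collapsible V L S"
    then show "collapsible V L' S" by (rule collapsible_agree) (use assms in auto)
  next
    assume "collapsible V L' S"
    then show "collapsible V L S" by (rule collapsible_agree) (use sym in auto)
  qed
  ultimately show ?thesis by simp
qed

lemma card_ge_2_or_singleton:
  assumes "finite A" "A \<noteq> {}"
  shows "2 \<le> card A \<or> (\<exists>v. A = {v})"
proof -
  have "card A \<noteq> 0" using assms by simp
  then consider "card A = 1" | "2 \<le> card A" by linarith
  then show ?thesis by cases (auto simp: card_1_singleton_iff)
qed

lemma collapse_blocked_hproj_eq_iff: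
  assumes "finite V" and blocked: "collapse_blocked V L S"
  shows "(\<forall>A. A \<subseteq> V - S \<and> A \<noteq> {} \<longrightarrow> hproj V L S A = k A)
    \<longleftrightarrow> (\<forall>v\<in>V - S. k {v} = 0) \<and> (\<forall>A. A \<subseteq> V - S \<and> 2 \<le> card A \<longrightarrow> hproj V L S A = k A)"
    (is "?all \<longleftrightarrow> ?singletons \<and> ?large")
proof (intro iffI conjI)
  assume ?all
  then show ?singletons using blocked by (auto simp: collapse_blocked_def)
  show ?large
  proof (intro allI impI)
    fix A assume "A \<subseteq> V - S \<and> 2 \<le> card A"
    moreover from this have "A \<noteq> {}" by auto
    ultimately show "hproj V L S A = k A" using \<open>?all\<close> by blast
  qed
next
  assume "?singletons \<and> ?large"
  show ?all
  proof (intro allI impI)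
    fix A assume A: "A \<subseteq> V - S \<and> A \<noteq> {}"
    then have "finite A" using finite_subset[of A V] \<open>finite V\<close> by blast
    then consider "2 \<le> card A" | v where "A = {v}"
      using card_ge_2_or_singleton A by blast
    then show "hproj V L S A = k A"
    proof cases
      case 1
      then show ?thesis using A \<open>?singletons \<and> ?large\<close> by blast
    next
      case 2
      then show ?thesis using A \<open>?singletons \<and> ?large\<close> blocked by (simp add: collapse_blocked_def)
    qed
  qed
qed

section \<open>Rates of the projected hypergraph\<close>

lemma sum_Pow_card:
  fixes g :: "nat \<Rightarrow> real"
  assumes "finite S"
  shows "(\<Sum>C\<in>Pow S. g (card C)) = (\<Sum>i\<le>card S. real (card S choose i) * g i)"
proof -
  have "(\<Sum>C\<in>Pow S. g (card C)) = (\<Sum>i\<le>card S. \<Sum>C\<in>{C \<in> Pow S. card C = i}. g (card C))"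
    by (rule sum.group[symmetric]) (use assms card_mono in auto)
  also have "\<dots> = (\<Sum>i\<le>card S. real (card S choose i) * g i)"
    by (rule sum.cong) (simp_all add: n_subsets[OF assms])
  finally show ?thesis .
qed

lemma hyper_rate_fibre_sum:
  assumes S: "S \<subseteq> {1..N}" and A: "A \<subseteq> {1..N} - S" and j: "2 \<le> card A"
  shows "(\<Sum>B | B \<subseteq> {1..N} \<and> A \<subseteq> B \<and> B - S = A. hyper_rate N \<rho> B * t)
       = real (N - card S) * beta_coef N \<rho> t (card S) (card A) / real ((N - card S) choose card A)"
proof -
  let ?m = "card S" and ?j = "card A"
  have fin: "finite S" "finite A" using finite_subset[OF S] finite_subset[OF A] by auto
  have disj: "A \<inter> S = {}" using A by auto
  have "card ({1..N} - S) = N - ?m" using S fin by (simp add: card_Diff_subset)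
  then have j_le: "?j \<le> N - ?m" using card_mono[OF _ A] by simp
  have "{B. B \<subseteq> {1..N} \<and> A \<subseteq> B \<and> B - S = A} = (\<lambda>C. A \<union> C) ` Pow S"
    using A S by (auto intro!: image_eqI[of _ _ "_ \<inter> S"])
  moreover have "inj_on (\<lambda>C. A \<union> C) (Pow S)"
    using disj by (auto intro!: inj_onI)
  moreover have "card (A \<union> C) = ?j + card C" if "C \<in> Pow S" for C
    using that disj fin finite_subset[of C S] by (subst card_Un_disjoint) auto
  ultimately have "(\<Sum>B | B \<subseteq> {1..N} \<and> A \<subseteq> B \<and> B - S = A. hyper_rate N \<rho> B * t)
      = (\<Sum>C\<in>Pow S. real N * \<rho> (?j + card C) / real (N choose (?j + card C)) * t)"
    by (simp add: sum.reindex hyper_rate_def)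
  also have "\<dots> = (\<Sum>i\<le>?m. real (?m choose i) * (real N * \<rho> (?j + i) / real (N choose (?j + i)) * t))"
    by (rule sum_Pow_card[OF fin(1)])
  \<comment> \<open>the series in \<open>beta_coef\<close> is a finite sum: \<open>?m choose i = 0\<close> for \<open>i > ?m\<close>\<close>
  also have "\<dots> = t * real N * (\<Sum>i. \<rho> (i + ?j) * real (?m choose i) / real (N choose (?j + i)))"
    by (subst suminf_finite[of "{..?m}"]) (auto simp: sum_distrib_left algebra_simps)
  also have "\<dots> = real (N - ?m) * beta_coef N \<rho> t ?m ?j / real ((N - ?m) choose ?j)"
  proof -
    have "?m < N" and "real ((N - ?m) choose ?j) \<noteq> 0" using j_le j by auto
    then show ?thesis using j by (simp add: beta_coef_def field_simps)
  qed
  finally show ?thesis .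
qed

section \<open>The Poisson hypergraph at a fixed time\<close>

locale poisson_hypergraph = prob_space M
  for M :: "'a measure" and N :: nat and \<rho> :: "nat \<Rightarrow> real"
    and \<Lambda> :: "real \<Rightarrow> 'a \<Rightarrow> nat set \<Rightarrow> nat" and t :: real +
  assumes process: "poisson_hypergraph_process M N \<rho> \<Lambda>"
    and t_pos: "0 < t"
begin

abbreviation V :: "nat set" where "V \<equiv> {1..N}"

abbreviation paths :: "(real \<Rightarrow> nat) measure" where
  "paths \<equiv> PiM {0..} (\<lambda>_. count_space UNIV)"

text \<open>\<open>F_sub M N \<Lambda> S t\<close> is generated by the counts of the inner edges of \<open>S\<close>, which are
independent of those of the outer edges.\<close>

definition inner_edges :: "nat set \<Rightarrow> nat set set" where
  "inner_edges S = {A. A \<subseteq> V \<and> card (A - S) \<le> 1}"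

definition outer_edges :: "nat set \<Rightarrow> nat set set" where
  "outer_edges S = {A. A \<subseteq> V \<and> 1 < card (A - S)}"

definition Vstar_event :: "nat set \<Rightarrow> 'a set" where
  "Vstar_event S = {\<omega>\<in>space M. Vstar N \<Lambda> t \<omega> = S}"

definition outer_event :: "nat set \<Rightarrow> (nat set \<Rightarrow> nat) set \<Rightarrow> 'a set" where
  "outer_event S e = {\<omega>\<in>space M. (\<lambda>A\<in>outer_edges S. \<Lambda> t \<omega> A) \<in> e}"

lemma edge_process: "A \<subseteq> V \<Longrightarrow> poisson_process M (hyper_rate N \<rho> A) (\<lambda>s \<omega>. \<Lambda> s \<omega> A)"
  using process unfolding poisson_hypergraph_process_def by auto

lemma measurable_edge: "A \<subseteq> V \<Longrightarrow> 0 \<le> s \<Longrightarrow> (\<lambda>\<omega>. \<Lambda> s \<omega> A) \<in> measurable M (count_space UNIV)"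
  using edge_process unfolding poisson_process_def by auto

lemma edge_event_sets: "A \<subseteq> V \<Longrightarrow> 0 \<le> s \<Longrightarrow> {\<omega>\<in>space M. \<Lambda> s \<omega> A = k} \<in> sets M"
  using measurable_sets[OF measurable_edge, of A s "{k}"] by (simp add: vimage_def Int_def conj_commute)

lemma prob_edge: "A \<subseteq> V \<Longrightarrow> prob {\<omega>\<in>space M. \<Lambda> t \<omega> A = k} = poisson_prob (hyper_rate N \<rho> A * t) k"
proof -
  assume "A \<subseteq> V"
  then have start: "\<forall>\<omega>\<in>space M. \<Lambda> 0 \<omega> A = 0"
    and increment: "prob {\<omega>\<in>space M. \<Lambda> t \<omega> A - \<Lambda> 0 \<omega> A = k} = poisson_prob (hyper_rate N \<rho> A * (t - 0)) k"
    using edge_process t_pos unfolding poisson_process_def by auto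
  have "{\<omega>\<in>space M. \<Lambda> t \<omega> A - \<Lambda> 0 \<omega> A = k} = {\<omega>\<in>space M. \<Lambda> t \<omega> A = k}"
    using start by auto
  then show ?thesis using increment by simp
qed

lemma indep_edge_paths: "indep_vars (\<lambda>_. paths) (\<lambda>A \<omega>. restrict (\<lambda>s. \<Lambda> s \<omega> A) {0..}) (Pow V)"
  using process unfolding poisson_hypergraph_process_def by simp

lemma measurable_path_eval:
  assumes "A \<in> I" "0 \<le> s"
  shows "(\<lambda>f. f A s) \<in> measurable (PiM I (\<lambda>_. paths)) (count_space UNIV)"
proof -
  have "(\<lambda>g. g s) \<in> measurable paths (count_space UNIV)"
    using assms(2) by (intro measurable_component_singleton) simp
  with measurable_component_singleton[OF assms(1)] show ?thesis
    by (rule measurable_compose)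
qed

lemma indep_edges: "indep_vars (\<lambda>_. count_space UNIV) (\<lambda>A \<omega>. \<Lambda> t \<omega> A) (Pow V)"
proof -
  have "indep_vars (\<lambda>_. count_space UNIV) (\<lambda>A \<omega>. (\<lambda>f. f t) (restrict (\<lambda>s. \<Lambda> s \<omega> A) {0..})) (Pow V)"
    using t_pos by (intro indep_vars_compose2[OF indep_edge_paths] measurable_component_singleton) simp
  then show ?thesis using t_pos by simp
qed

lemma edge_counts_event_sets: "I \<subseteq> Pow V \<Longrightarrow> {\<omega>\<in>space M. (\<lambda>A\<in>I. \<Lambda> t \<omega> A) \<in> e} \<in> sets M"
proof -
  assume I: "I \<subseteq> Pow V"
  then have "finite I" by (rule finite_subset) simp
  have "(\<lambda>\<omega>. \<lambda>A\<in>I. \<Lambda> t \<omega> A) \<in> measurable M (PiM I (\<lambda>_. count_space UNIV))"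
    using I t_pos by (intro measurable_restrict measurable_edge) auto
  moreover have "e \<inter> space (PiM I (\<lambda>_. count_space UNIV)) \<in> sets (PiM I (\<lambda>_. count_space UNIV))"
    using \<open>finite I\<close> by (intro sets_PiM_count_space_finite) auto
  ultimately have "(\<lambda>\<omega>. \<lambda>A\<in>I. \<Lambda> t \<omega> A) -` (e \<inter> space (PiM I (\<lambda>_. count_space UNIV))) \<inter> space M \<in> sets M"
    by (rule measurable_sets)
  then show ?thesis by (simp add: space_PiM vimage_def Int_def conj_commute)
qed

lemma outer_event_sets: "outer_event S e \<in> sets M"
  unfolding outer_event_def by (rule edge_counts_event_sets) (auto simp: outer_edges_def)

lemma Vstar_eq_iff: "Vstar N \<Lambda> t \<omega> = S \<longleftrightarrow> collapsible V (\<Lambda> t \<omega>) S \<and> collapse_blocked V (\<Lambda> t \<omega>) S"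
  unfolding Vstar_def by (rule identifiable_eq_iff) simp

lemma Vstar_subset: "Vstar N \<Lambda> t \<omega> \<subseteq> V"
  using Vstar_eq_iff collapsible_subset by blast

lemma
  shows space_F_sub: "space (F_sub M N \<Lambda> S t) = space M"
    and sets_F_sub: "sets (F_sub M N \<Lambda> S t) = sigma_sets (space M)
      {{\<omega>\<in>space M. \<Lambda> s \<omega> A = k} | s A k. 0 \<le> s \<and> s \<le> t \<and> A \<subseteq> V \<and> card (A - S) \<le> 1}"
  unfolding F_sub_def by (auto simp: space_measure_of_conv intro!: sets_measure_of)

lemma sets_F_sub_subset: "sets (F_sub M N \<Lambda> S t) \<subseteq> sets M"
  unfolding sets_F_sub by (rule sets.sigma_sets_subset) (use edge_event_sets in blast)

lemma measurable_F_sub_inner: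
  assumes "A \<in> inner_edges S"
  shows "(\<lambda>\<omega>. \<Lambda> t \<omega> A) \<in> measurable (F_sub M N \<Lambda> S t) (count_space UNIV)"
  unfolding measurable_count_space_eq2_countable
proof (intro conjI ballI)
  fix k :: nat
  have "{\<omega>\<in>space M. \<Lambda> t \<omega> A = k} \<in> sets (F_sub M N \<Lambda> S t)"
    using assms t_pos unfolding sets_F_sub inner_edges_def
    by (intro sigma_sets.Basic) (auto intro!: exI[of _ t] exI[of _ A])
  then show "(\<lambda>\<omega>. \<Lambda> t \<omega> A) -` {k} \<inter> space (F_sub M N \<Lambda> S t) \<in> sets (F_sub M N \<Lambda> S t)"
    by (simp add: space_F_sub vimage_def Int_def conj_commute)
qed simp

lemma Vstar_event_F_sub:
  assumes S: "S \<subseteq> V"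
  shows "Vstar_event S \<in> sets (F_sub M N \<Lambda> S t)"
proof -
  have fin: "finite (inner_edges S)"
    by (rule finite_subset[of _ "Pow V"]) (auto simp: inner_edges_def)
  let ?counts = "PiM (inner_edges S) (\<lambda>_. count_space (UNIV :: nat set))"
  let ?Y = "\<lambda>\<omega>. \<lambda>A\<in>inner_edges S. \<Lambda> t \<omega> A"
  let ?ext = "\<lambda>h A. if A \<in> inner_edges S then h A else 0"
  let ?Q = "{h \<in> space ?counts. collapsible V (?ext h) S \<and> collapse_blocked V (?ext h) S}"
  have "?Y \<in> measurable (F_sub M N \<Lambda> S t) ?counts"
    by (intro measurable_restrict measurable_F_sub_inner)
  moreover have "?Q \<in> sets ?counts"
    by (rule sets_PiM_count_space_finite[OF fin]) auto
  ultimately have "?Y -` ?Q \<inter> space (F_sub M N \<Lambda> S t) \<in> sets (F_sub M N \<Lambda> S t)"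
    by (rule measurable_sets)
  moreover have "Vstar N \<Lambda> t \<omega> = S \<longleftrightarrow> ?Y \<omega> \<in> ?Q" for \<omega>
  proof -
    have "collapsible V (\<Lambda> t \<omega>) S \<and> collapse_blocked V (\<Lambda> t \<omega>) S
        \<longleftrightarrow> collapsible V (?ext (?Y \<omega>)) S \<and> collapse_blocked V (?ext (?Y \<omega>)) S"
      by (rule collapsible_blocked_agree) (simp add: inner_edges_def)
    then show ?thesis unfolding Vstar_eq_iff by (simp add: space_PiM)
  qed
  ultimately show ?thesis
    unfolding Vstar_event_def space_F_sub by (simp add: vimage_def Int_def conj_commute)
qed

lemma Vstar_event_sets: "Vstar_event S \<in> sets M"
proof (cases "S \<subseteq> V")
  case False
  then have "Vstar_event S = {}" using Vstar_subset by (auto simp: Vstar_event_def)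
  then show ?thesis by simp
qed (use Vstar_event_F_sub sets_F_sub_subset in blast)

definition edge_paths :: "nat set set \<Rightarrow> 'a \<Rightarrow> nat set \<Rightarrow> real \<Rightarrow> nat" where
  "edge_paths I \<omega> = (\<lambda>A\<in>I. restrict (\<lambda>s. \<Lambda> s \<omega> A) {0..})"

lemma measurable_edge_paths:
  assumes "I \<subseteq> Pow V"
  shows "edge_paths I \<in> measurable M (PiM I (\<lambda>_. paths))"
  unfolding edge_paths_def
proof (rule measurable_restrict)
  fix A assume "A \<in> I"
  then show "(\<lambda>\<omega>. restrict (\<lambda>s. \<Lambda> s \<omega> A) {0..}) \<in> measurable M paths"
    using assms indep_edge_paths unfolding indep_vars_def by blast
qed

lemma sets_F_sub_vimage_inner_paths:
  "sets (F_sub M N \<Lambda> S t) \<subseteq> sets (vimage_algebra (space M) (edge_paths (inner_edges S)) (PiM (inner_edges S) (\<lambda>_. paths)))"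
  (is "_ \<subseteq> sets ?F")
proof -
  have paths: "edge_paths (inner_edges S) \<in> measurable M (PiM (inner_edges S) (\<lambda>_. paths))"
    by (rule measurable_edge_paths) (auto simp: inner_edges_def)
  then have paths_space: "edge_paths (inner_edges S) \<in> space M \<rightarrow> space (PiM (inner_edges S) (\<lambda>_. paths))"
    by (auto intro: measurable_space)
  have "{\<omega>\<in>space M. \<Lambda> s \<omega> A = k} \<in> sets ?F" if "0 \<le> s" "s \<le> t" "A \<in> inner_edges S" for s A k
  proof -
    have "{f \<in> space (PiM (inner_edges S) (\<lambda>_. paths)). f A s = k} \<in> sets (PiM (inner_edges S) (\<lambda>_. paths))"
      using measurable_path_eval[OF that(3,1)]
      by (simp add: measurable_count_space_eq2_countable vimage_def Int_def conj_commute)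
    moreover have "{\<omega>\<in>space M. \<Lambda> s \<omega> A = k}
        = edge_paths (inner_edges S) -` {f \<in> space (PiM (inner_edges S) (\<lambda>_. paths)). f A s = k} \<inter> space M"
      using measurable_space[OF paths] that by (auto simp: edge_paths_def)
    ultimately show ?thesis
      unfolding sets_vimage_algebra2[OF paths_space] by blast
  qed
  then have "sigma_sets (space ?F)
      {{\<omega>\<in>space M. \<Lambda> s \<omega> A = k} | s A k. 0 \<le> s \<and> s \<le> t \<and> A \<subseteq> V \<and> card (A - S) \<le> 1} \<subseteq> sets ?F"
    by (intro sets.sigma_sets_subset) (auto simp: inner_edges_def)
  then show ?thesis by (simp add: sets_F_sub)
qed

lemma outer_event_vimage_outer_paths:
  "\<exists>c \<in> sets (PiM (outer_edges S) (\<lambda>_. paths)). outer_event S e = edge_paths (outer_edges S) -` c \<inter> space M"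
proof
  let ?counts = "PiM (outer_edges S) (\<lambda>_. count_space (UNIV :: nat set))"
  let ?at_t = "\<lambda>f. \<lambda>A\<in>outer_edges S. f A t"
  have "?at_t \<in> measurable (PiM (outer_edges S) (\<lambda>_. paths)) ?counts"
    using t_pos by (intro measurable_restrict measurable_path_eval) auto
  moreover have "finite (outer_edges S)"
    by (rule finite_subset[of _ "Pow V"]) (auto simp: outer_edges_def)
  then have "e \<inter> space ?counts \<in> sets ?counts"
    by (intro sets_PiM_count_space_finite) auto
  ultimately have "?at_t -` (e \<inter> space ?counts) \<inter> space (PiM (outer_edges S) (\<lambda>_. paths))
      \<in> sets (PiM (outer_edges S) (\<lambda>_. paths))"
    by (rule measurable_sets)
  then show "{f \<in> space (PiM (outer_edges S) (\<lambda>_. paths)). ?at_t f \<in> e} \<in> sets (PiM (outer_edges S) (\<lambda>_. paths))"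
    by (simp add: space_PiM vimage_def Int_def conj_commute)
  have "?at_t (edge_paths (outer_edges S) \<omega>) = (\<lambda>A\<in>outer_edges S. \<Lambda> t \<omega> A)" for \<omega>
    using t_pos by (auto simp: edge_paths_def)
  moreover have "edge_paths (outer_edges S) \<in> measurable M (PiM (outer_edges S) (\<lambda>_. paths))"
    by (rule measurable_edge_paths) (auto simp: outer_edges_def)
  ultimately show "outer_event S e
      = edge_paths (outer_edges S) -` {f \<in> space (PiM (outer_edges S) (\<lambda>_. paths)). ?at_t f \<in> e} \<inter> space M"
    by (auto simp: outer_event_def dest: measurable_space)
qed

lemma indep_F_sub_outer_event:
  assumes "Y \<in> sets (F_sub M N \<Lambda> S t)"
  shows "prob (Y \<inter> outer_event S e) = prob Y * prob (outer_event S e)"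
proof -
  have indep: "indep_var (PiM (inner_edges S) (\<lambda>_. paths)) (edge_paths (inner_edges S))
      (PiM (outer_edges S) (\<lambda>_. paths)) (edge_paths (outer_edges S))"
    unfolding edge_paths_def
    by (rule indep_var_restrict[OF indep_edge_paths]) (auto simp: inner_edges_def outer_edges_def)
  have "edge_paths (inner_edges S) \<in> space M \<rightarrow> space (PiM (inner_edges S) (\<lambda>_. paths))"
    using measurable_edge_paths[of "inner_edges S"] by (auto simp: inner_edges_def dest: measurable_space)
  moreover have "Y \<in> sets (vimage_algebra (space M) (edge_paths (inner_edges S)) (PiM (inner_edges S) (\<lambda>_. paths)))"
    using sets_F_sub_vimage_inner_paths assms by blast
  ultimately obtain a where a: "a \<in> sets (PiM (inner_edges S) (\<lambda>_. paths))"
    and Y: "Y = edge_paths (inner_edges S) -` a \<inter> space M"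
    by (auto simp: sets_vimage_algebra2)
  obtain c where c: "c \<in> sets (PiM (outer_edges S) (\<lambda>_. paths))"
    and outer: "outer_event S e = edge_paths (outer_edges S) -` c \<inter> space M"
    using outer_event_vimage_outer_paths by blast
  have "Y \<inter> outer_event S e = (\<lambda>\<omega>. (edge_paths (inner_edges S) \<omega>, edge_paths (outer_edges S) \<omega>)) -` (a \<times> c) \<inter> space M"
    unfolding Y outer by auto
  then show ?thesis
    using indep_varD[OF indep a c] by (simp add: Y outer)
qed

section \<open>Conditioning on the identifiable set\<close>

lemma
  shows space_F_stop: "space (F_stop M N \<Lambda> t) = space M"
    and sets_F_stop: "sets (F_stop M N \<Lambda> t) = sigma_sets (space M)
      {B \<in> sets M. \<forall>S. S \<subseteq> V \<longrightarrow> B \<inter> Vstar_event S \<in> sets (F_sub M N \<Lambda> S t)}"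
  unfolding F_stop_def Vstar_event_def
  by (auto simp: space_measure_of_conv dest: sets.sets_into_space intro!: sets_measure_of)

lemma F_stop_Int_Vstar_event:
  assumes "B \<in> sets (F_stop M N \<Lambda> t)"
  shows "B \<in> sets M \<and> (\<forall>S. S \<subseteq> V \<longrightarrow> B \<inter> Vstar_event S \<in> sets (F_sub M N \<Lambda> S t))"
  using assms unfolding sets_F_stop
proof (induction rule: sigma_sets.induct)
  case (Compl B)
  have "(space M - B) \<inter> Vstar_event S = Vstar_event S - B \<inter> Vstar_event S" for S
    by (auto simp: Vstar_event_def)
  then show ?case using Compl.IH Vstar_event_F_sub by auto
next
  case (Union B)
  have "(\<Union>i. B i) \<inter> Vstar_event S \<in> sets (F_sub M N \<Lambda> S t)" if "S \<subseteq> V" for S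
  proof -
    have "(\<Union>i. B i \<inter> Vstar_event S) \<in> sets (F_sub M N \<Lambda> S t)"
      using Union.IH that by (intro sets.countable_UN) auto
    then show ?thesis by (simp add: Int_UN_distrib2)
  qed
  then show ?case using Union.IH by auto
qed auto

lemma Vstar_event_F_stop: "S \<subseteq> V \<Longrightarrow> Vstar_event S \<in> sets (F_stop M N \<Lambda> t)"
proof -
  assume S: "S \<subseteq> V"
  have "Vstar_event S \<inter> Vstar_event S' \<in> sets (F_sub M N \<Lambda> S' t)" if "S' \<subseteq> V" for S'
  proof (cases "S = S'")
    case False
    then have "Vstar_event S \<inter> Vstar_event S' = {}" by (auto simp: Vstar_event_def)
    then show ?thesis by simp
  qed (use that Vstar_event_F_sub in simp)
  then show ?thesis
    unfolding sets_F_stop using Vstar_event_sets by (intro sigma_sets.Basic) auto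
qed

lemma subalgebra_F_stop: "subalgebra M (F_stop M N \<Lambda> t)"
  unfolding subalgebra_def using F_stop_Int_Vstar_event space_F_stop by auto

lemma cond_exp_Vstar_event_outer_event:
  assumes "S \<subseteq> V"
  shows "AE \<omega> in M. real_cond_exp M (F_stop M N \<Lambda> t) (indicator (Vstar_event S \<inter> outer_event S e)) \<omega>
    = prob (outer_event S e) * indicator (Vstar_event S) \<omega>"
proof -
  interpret finite_measure_subalgebra M "F_stop M N \<Lambda> t"
    by unfold_locales (rule subalgebra_F_stop)
  show ?thesis
  proof (rule real_cond_exp_indicator_Int_indep)
    fix B assume "B \<in> sets (F_stop M N \<Lambda> t)"
    then have "B \<inter> Vstar_event S \<in> sets (F_sub M N \<Lambda> S t)"
      using F_stop_Int_Vstar_event assms by blast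
    then show "prob (B \<inter> Vstar_event S \<inter> outer_event S e) = prob (B \<inter> Vstar_event S) * prob (outer_event S e)"
      by (rule indep_F_sub_outer_event)
  qed (use assms Vstar_event_F_stop outer_event_sets in auto)
qed

lemma sum_Vstar_event:
  assumes "\<omega> \<in> space M"
  shows "(\<Sum>S\<in>Pow V. f S * indicator (Vstar_event S) \<omega>) = (f (Vstar N \<Lambda> t \<omega>) :: real)"
proof -
  have "(\<Sum>S\<in>Pow V. f S * indicator (Vstar_event S) \<omega>) = (\<Sum>S\<in>Pow V. if S = Vstar N \<Lambda> t \<omega> then f S else 0)"
    using assms by (intro sum.cong) (auto simp: Vstar_event_def)
  then show ?thesis using Vstar_subset by simp
qed

lemma indicator_outer_event_at_Vstar:
  "indicator {\<omega>\<in>space M. \<omega> \<in> outer_event (Vstar N \<Lambda> t \<omega>) (e (Vstar N \<Lambda> t \<omega>))} \<omega>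
    = (\<Sum>S\<in>Pow V. indicator (Vstar_event S \<inter> outer_event S (e S)) \<omega> :: real)"
proof (cases "\<omega> \<in> space M")
  case True
  have "(\<Sum>S\<in>Pow V. indicator (Vstar_event S \<inter> outer_event S (e S)) \<omega>)
      = (\<Sum>S\<in>Pow V. indicator (outer_event S (e S)) \<omega> * indicator (Vstar_event S) \<omega> :: real)"
    by (simp add: indicator_inter_arith mult.commute)
  also have "\<dots> = indicator (outer_event (Vstar N \<Lambda> t \<omega>) (e (Vstar N \<Lambda> t \<omega>))) \<omega>"
    using True by (rule sum_Vstar_event)
  finally show ?thesis using True by (simp add: indicator_def)
qed (simp add: Vstar_event_def indicator_def)

lemma cond_exp_outer_event_at_Vstar:
  "AE \<omega> in M. real_cond_exp M (F_stop M N \<Lambda> t)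
      (indicator {\<omega>\<in>space M. \<omega> \<in> outer_event (Vstar N \<Lambda> t \<omega>) (e (Vstar N \<Lambda> t \<omega>))}) \<omega>
    = prob (outer_event (Vstar N \<Lambda> t \<omega>) (e (Vstar N \<Lambda> t \<omega>)))"
proof -
  interpret finite_measure_subalgebra M "F_stop M N \<Lambda> t"
    by unfold_locales (rule subalgebra_F_stop)
  let ?X = "\<lambda>S. Vstar_event S \<inter> outer_event S (e S)"
  have "AE \<omega> in M. real_cond_exp M (F_stop M N \<Lambda> t) (\<lambda>\<omega>. \<Sum>S\<in>Pow V. indicator (?X S) \<omega>) \<omega>
      = (\<Sum>S\<in>Pow V. real_cond_exp M (F_stop M N \<Lambda> t) (indicator (?X S)) \<omega>)"
    using Vstar_event_sets outer_event_sets
    by (intro real_cond_exp_sum integrable_real_indicator) (auto simp: less_top[symmetric])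
  moreover have "AE \<omega> in M. \<forall>S\<in>Pow V. real_cond_exp M (F_stop M N \<Lambda> t) (indicator (?X S)) \<omega>
      = prob (outer_event S (e S)) * indicator (Vstar_event S) \<omega>"
    by (intro AE_finite_allI cond_exp_Vstar_event_outer_event) auto
  moreover have "AE \<omega> in M. \<omega> \<in> space M"
    by (rule AE_space)
  ultimately show ?thesis
    unfolding indicator_outer_event_at_Vstar
  proof eventually_elim
    case (elim \<omega>)
    then have "real_cond_exp M (F_stop M N \<Lambda> t) (\<lambda>\<omega>. \<Sum>S\<in>Pow V. indicator (?X S) \<omega>) \<omega>
        = (\<Sum>S\<in>Pow V. prob (outer_event S (e S)) * indicator (Vstar_event S) \<omega>)"
      by simp
    also have "\<dots> = prob (outer_event (Vstar N \<Lambda> t \<omega>) (e (Vstar N \<Lambda> t \<omega>)))"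
      using elim(3) by (rule sum_Vstar_event)
    finally show ?case .
  qed
qed

lemma cond_exp_outer_edges:
  "AE \<omega> in M. real_cond_exp M (F_stop M N \<Lambda> t)
      (indicator {\<omega>\<in>space M. \<forall>A. A \<subseteq> V \<and> card (A - Vstar N \<Lambda> t \<omega>) > 1 \<longrightarrow> \<Lambda> t \<omega> A = k A}) \<omega>
    = p_event M N \<Lambda> t k (Vstar N \<Lambda> t \<omega>)"
proof -
  define e where "e S = {g. \<forall>A\<in>outer_edges S. g A = k A}" for S
  have "outer_event S (e S) = {\<omega>\<in>space M. \<forall>A. A \<subseteq> V \<and> card (A - S) > 1 \<longrightarrow> \<Lambda> t \<omega> A = k A}" for S
    by (auto simp: e_def outer_event_def outer_edges_def)
  then show ?thesis
    using cond_exp_outer_event_at_Vstar[of e] by (simp add: p_event_def)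
qed

definition projected_mean :: "nat set \<Rightarrow> nat set \<Rightarrow> real" where
  "projected_mean S A = real (N - card S) * beta_coef N \<rho> t (card S) (card A) / real ((N - card S) choose card A)"

definition projection_event :: "nat set \<Rightarrow> (nat set \<Rightarrow> nat) \<Rightarrow> 'a set" where
  "projection_event S k =
     {\<omega>\<in>space M. \<forall>A. A \<subseteq> V - S \<and> A \<noteq> {} \<longrightarrow> hproj V (\<Lambda> t \<omega>) S A = k A}"

text \<open>On \<open>Vstar_event S\<close> the two events agree, since the singletons of the projection vanish
there, but only the second one is determined by the outer edges.\<close>

definition outer_projection_event :: "nat set \<Rightarrow> (nat set \<Rightarrow> nat) \<Rightarrow> 'a set" where
  "outer_projection_event S k = outer_event S
     {g. (\<forall>v\<in>V - S. k {v} = 0) \<and> (\<forall>A. A \<subseteq> V - S \<and> 2 \<le> card A \<longrightarrow> hproj V g S A = k A)}"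

lemma hproj_restrict_outer_edges:
  assumes "A \<subseteq> V - S" "2 \<le> card A"
  shows "hproj V (\<lambda>B\<in>outer_edges S. L B) S A = hproj V L S A"
  unfolding hproj_def using assms by (intro sum.cong) (auto simp: outer_edges_def)

lemma outer_projection_event_eq:
  "outer_projection_event S k = {\<omega>\<in>space M. (\<forall>v\<in>V - S. k {v} = 0)
      \<and> (\<forall>A. A \<subseteq> V - S \<and> 2 \<le> card A \<longrightarrow> hproj V (\<Lambda> t \<omega>) S A = k A)}"
proof -
  have "hproj V (\<lambda>B\<in>outer_edges S. \<Lambda> t \<omega> B) S A = hproj V (\<Lambda> t \<omega>) S A"
    if "A \<subseteq> V - S" "2 \<le> card A" for \<omega> A
    using that by (rule hproj_restrict_outer_edges)
  then show ?thesis unfolding outer_projection_event_def outer_event_def by simp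
qed

lemma Vstar_event_Int_projection_event:
  "Vstar_event S \<inter> projection_event S k = Vstar_event S \<inter> outer_projection_event S k"
proof -
  have "\<omega> \<in> projection_event S k \<longleftrightarrow> \<omega> \<in> outer_projection_event S k" if "\<omega> \<in> Vstar_event S" for \<omega>
  proof -
    have "\<omega> \<in> space M" and blocked: "collapse_blocked V (\<Lambda> t \<omega>) S"
      using that by (simp_all add: Vstar_event_def Vstar_eq_iff)
    then show ?thesis
      unfolding projection_event_def outer_projection_event_eq
      using collapse_blocked_hproj_eq_iff[OF finite_atLeastAtMost blocked, of k] by simp
  qed
  then show ?thesis by blast
qed

lemma projection_event_sets: "projection_event S k \<in> sets M"
proof -
  have "hproj V (\<lambda>B\<in>Pow V. \<Lambda> t \<omega> B) S A = hproj V (\<Lambda> t \<omega>) S A" for \<omega> A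
    by (rule hproj_cong) simp
  then have "projection_event S k = {\<omega>\<in>space M. (\<lambda>A\<in>Pow V. \<Lambda> t \<omega> A) \<in>
      {g. \<forall>A. A \<subseteq> V - S \<and> A \<noteq> {} \<longrightarrow> hproj V g S A = k A}}"
    unfolding projection_event_def by simp
  then show ?thesis by (simp only:) (rule edge_counts_event_sets, simp)
qed

lemma prob_hproj_large_edges:
  assumes S: "S \<subseteq> V"
  shows "prob {\<omega>\<in>space M. \<forall>A\<in>{A. A \<subseteq> V - S \<and> 2 \<le> card A}. hproj V (\<Lambda> t \<omega>) S A = k A}
    = (\<Prod>A | A \<subseteq> V - S \<and> 2 \<le> card A. poisson_prob (projected_mean S A) (k A))"
proof -
  define fibre where "fibre A = {B. B \<subseteq> V \<and> A \<subseteq> B \<and> B - S = A}" for A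
  have fibre_Pow: "fibre A \<subseteq> Pow V" for A
    by (auto simp: fibre_def)
  have "prob {\<omega>\<in>space M. \<forall>A\<in>{A. A \<subseteq> V - S \<and> 2 \<le> card A}. (\<Sum>B\<in>fibre A. \<Lambda> t \<omega> B) = k A}
      = (\<Prod>A | A \<subseteq> V - S \<and> 2 \<le> card A. poisson_prob (\<Sum>B\<in>fibre A. hyper_rate N \<rho> B * t) (k A))"
  proof (rule indep_vars_poisson_sums[OF indep_edges])
    show "finite {A. A \<subseteq> V - S \<and> 2 \<le> card A}"
      by (rule finite_subset[of _ "Pow V"]) auto
    show "disjoint_family_on fibre {A. A \<subseteq> V - S \<and> 2 \<le> card A}"
      by (auto simp: disjoint_family_on_def fibre_def)
    show "finite (fibre A) \<and> fibre A \<subseteq> Pow V" for A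
      using finite_subset[OF fibre_Pow] fibre_Pow by simp
  qed (simp add: prob_edge)
  also have "\<dots> = (\<Prod>A | A \<subseteq> V - S \<and> 2 \<le> card A. poisson_prob (projected_mean S A) (k A))"
    using hyper_rate_fibre_sum[OF S]
    by (intro prod.cong) (simp_all add: fibre_def projected_mean_def)
  finally show ?thesis by (simp add: fibre_def hproj_def)
qed

lemma prob_outer_projection_event:
  assumes S: "S \<subseteq> V"
  shows "prob (outer_projection_event S k)
    = (\<Prod>A | A \<subseteq> V - S \<and> A \<noteq> {}. poisson_prob (projected_mean S A) (k A))"
proof -
  let ?NE = "{A. A \<subseteq> V - S \<and> A \<noteq> {}}" and ?D = "{A. A \<subseteq> V - S \<and> 2 \<le> card A}"
  have finite_NE: "finite ?NE"
    by (rule finite_subset[of _ "Pow V"]) auto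
  have singleton_factor: "poisson_prob (projected_mean S {v}) n = (if n = 0 then 1 else 0)" for v n
    by (simp add: projected_mean_def beta_coef_def poisson_prob_0)
  show ?thesis
  proof (cases "\<forall>v\<in>V - S. k {v} = 0")
    case False
    then obtain v where "v \<in> V - S" "k {v} \<noteq> 0" by blast
    then have "(\<Prod>A\<in>?NE. poisson_prob (projected_mean S A) (k A)) = 0"
      by (intro prod_zero[OF finite_NE] bexI[of _ "{v}"]) (auto simp: singleton_factor)
    moreover have "outer_projection_event S k = {}"
      using False unfolding outer_projection_event_eq by blast
    ultimately show ?thesis by simp
  next
    case True
    have "prob (outer_projection_event S k) = (\<Prod>A\<in>?D. poisson_prob (projected_mean S A) (k A))"
      using True prob_hproj_large_edges[OF S] by (simp add: outer_projection_event_eq)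
    also have "\<dots> = (\<Prod>A\<in>?NE. poisson_prob (projected_mean S A) (k A))"
    proof (rule prod.mono_neutral_left[OF finite_NE])
      show "?D \<subseteq> ?NE" by auto
    next
      show "\<forall>A\<in>?NE - ?D. poisson_prob (projected_mean S A) (k A) = 1"
      proof
      fix A assume A: "A \<in> ?NE - ?D"
      then have "finite A" using finite_subset[of A V] by auto
      then obtain v where "A = {v}" using card_ge_2_or_singleton A by auto
      then show "poisson_prob (projected_mean S A) (k A) = 1"
        using A True by (simp add: singleton_factor)
      qed
    qed
    finally show ?thesis .
  qed
qed

lemma cond_exp_projection:
  assumes S: "S \<subseteq> V"
  shows "AE \<omega> in M. Vstar N \<Lambda> t \<omega> = S \<longrightarrow>
      real_cond_exp M (F_stop M N \<Lambda> t) (indicator (projection_event S k)) \<omega>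
      = (\<Prod>A | A \<subseteq> V - S \<and> A \<noteq> {}. poisson_prob (projected_mean S A) (k A))"
proof -
  interpret finite_measure_subalgebra M "F_stop M N \<Lambda> t"
    by unfold_locales (rule subalgebra_F_stop)
  have indicator_eq: "indicator (Vstar_event S \<inter> outer_projection_event S k)
      = (\<lambda>\<omega>. indicator (Vstar_event S) \<omega> * indicator (projection_event S k) \<omega> :: real)"
    unfolding Vstar_event_Int_projection_event[symmetric] by (auto simp: indicator_def)
  have "AE \<omega> in M. real_cond_exp M (F_stop M N \<Lambda> t)
      (\<lambda>\<omega>. indicator (Vstar_event S) \<omega> * indicator (projection_event S k) \<omega>) \<omega>
      = prob (outer_projection_event S k) * indicator (Vstar_event S) \<omega>"
    unfolding indicator_eq[symmetric] outer_projection_event_def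
    by (rule cond_exp_Vstar_event_outer_event[OF S])
  moreover have "AE \<omega> in M. real_cond_exp M (F_stop M N \<Lambda> t)
      (\<lambda>\<omega>. indicator (Vstar_event S) \<omega> * indicator (projection_event S k) \<omega>) \<omega>
      = indicator (Vstar_event S) \<omega> * real_cond_exp M (F_stop M N \<Lambda> t) (indicator (projection_event S k)) \<omega>"
    using Vstar_event_F_stop[OF S] projection_event_sets Vstar_event_sets
    by (intro real_cond_exp_mult borel_measurable_indicator)
      (auto simp: indicator_eq[symmetric] outer_projection_event_def outer_event_sets
        less_top[symmetric] intro!: integrable_real_indicator)
  moreover have "AE \<omega> in M. \<omega> \<in> space M"
    by (rule AE_space)
  ultimately show ?thesis
  proof eventually_elim
    case (elim \<omega>)
    show ?case
    proof
      assume "Vstar N \<Lambda> t \<omega> = S"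
      then have "indicator (Vstar_event S) \<omega> = (1 :: real)"
        using elim(3) by (simp add: Vstar_event_def)
      then show "real_cond_exp M (F_stop M N \<Lambda> t) (indicator (projection_event S k)) \<omega>
          = (\<Prod>A | A \<subseteq> V - S \<and> A \<noteq> {}. poisson_prob (projected_mean S A) (k A))"
        using elim(1,2) by (simp add: prob_outer_projection_event[OF S])
    qed
  qed
qed

end

theorem lemma3p2:
  fixes M :: "'a measure" and \<rho> :: "nat \<Rightarrow> real" and N :: nat
    and \<Lambda> :: "real \<Rightarrow> 'a \<Rightarrow> nat set \<Rightarrow> nat" and t :: real
  assumes "prob_space M"
    and "\<rho> 0 = 0" and "\<forall>j. 0 \<le> \<rho> j" and "\<rho> sums 1"
    and "summable (\<lambda>j. real j * \<rho> j)"
    and "\<rho> 1 + \<rho> 2 > 0"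
    and "N \<ge> 1"
    and "poisson_hypergraph_process M N \<rho> \<Lambda>"
    and "t > 0"
  shows "(\<forall>k :: nat set \<Rightarrow> nat. AE \<omega> in M.
            real_cond_exp M (F_stop M N \<Lambda> t)
              (indicator {\<omega>\<in>space M. \<forall>A. A \<subseteq> {1..N} \<and> card (A - Vstar N \<Lambda> t \<omega>) > 1
                                          \<longrightarrow> \<Lambda> t \<omega> A = k A}) \<omega>
            = p_event M N \<Lambda> t k (Vstar N \<Lambda> t \<omega>))
       \<and> (\<forall>S (k :: nat set \<Rightarrow> nat). S \<subseteq> {1..N} \<longrightarrow> (AE \<omega> in M. Vstar N \<Lambda> t \<omega> = S \<longrightarrow>
            real_cond_exp M (F_stop M N \<Lambda> t)
              (indicator {\<omega>\<in>space M. \<forall>A. A \<subseteq> {1..N} - S \<and> A \<noteq> {}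
                                          \<longrightarrow> hproj {1..N} (\<Lambda> t \<omega>) S A = k A}) \<omega>
            = (\<Prod>A\<in>{A. A \<subseteq> {1..N} - S \<and> A \<noteq> {}}.
                 poisson_prob (real (N - card S) * beta_coef N \<rho> t (card S) (card A)
                                 / real ((N - card S) choose card A)) (k A))))"
proof -
  interpret poisson_hypergraph M N \<rho> \<Lambda> t
    using assms(1,8,9) by (simp add: poisson_hypergraph_def poisson_hypergraph_axioms_def)
  show ?thesis
    using cond_exp_outer_edges cond_exp_projection[unfolded projection_event_def projected_mean_def]
    by blast
qed

end
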